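(* Let $b,c_1,c_2$ be positive integers and let $N=b+c_1+c_2$. Let $R$ be the map that takes a tableau $T\in\mathrm{SET}(\mathcal{L}^{c_1,c_2}_b)$, replaces each entry $i$ by $N+1-i$, and rotates the result by 180 degrees. Then $R$ is a poset isomorphism from $\mathrm{SET}$ of the right lobster $\mathcal{L}^{c_1,c_2}_b$ (associated to the triple $(b,c_1,c_2)$) to $\mathrm{SET}$ of the left lobster associated to the triple $(b,c_2,c_1)$.
   Context: Rows of skew diagrams are numbered from the bottom. For positive integers $b,c_1,c_2$, the right lobster $\mathcal{L}^{c_1,c_2}_b$ is the skew diagram $\alpha/\beta$ with $\alpha=(b+1+c_2,b+1,b+1+c_1)$, $\beta=(b+1,1,b+1)$: a bottom row of $c_2$ cells in columns $b+2,\ldots,b+1+c_2$, a middle row (body) of $b$ cells in columns $2,\ldots,b+1$, and a top row of $c_1$ cells in columns $b+2,\ldots,b+1+c_1$. The left lobster associated to a triple $(b,c_1,c_2)$ is the three-row skew diagram whose top row has $c_1$ cells and bottom row has $c_2$ cells, both right-justified ending in a common column $m$ (with $m=\max(c_1,c_2)$), and whose middle row (body) has $b$ cells in columns $m+1,\ldots,m+b$; it is the 180-degree rotation of the right lobster with top row $c_2$ and bottom row $c_1$. $\mathrm{SET}$ of a skew shape with $N$ cells is the set of bijective fillings with $1,\ldots,N$ whose rows increase left to right and columns increase bottom to top. For $1\le i\le N-1$, $\pi_i(T)=T$ if $i+1$ is in a strictly higher row than $i$, $\pi_i(T)=s_i(T)$ (swap $i$ and $i+1$) if $i+1$ is in a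 strictly lower row than $i$, and $\pi_i(T)=0$ otherwise; the poset order is $T\le T'$ iff $T'$ is obtained from $T$ by a sequence of operators $\pi_i$ (all intermediate results nonzero). *)

theory Defs
  imports Main
begin

text \<open>Cells are pairs (row, column); rows are numbered from the bottom (row 1 is the bottom row).
A tableau is a function from cells to entries, which is 0 outside the shape.\<close>

type_synonym cell = "nat \<times> nat"
type_synonym tableau = "cell \<Rightarrow> nat"

definition SET :: "cell set \<Rightarrow> tableau set" where
  "SET D = {T. bij_betw T D {1..card D} \<and> (\<forall>x. x \<notin> D \<longrightarrow> T x = 0)
     \<and> (\<forall>r c c'. (r, c) \<in> D \<and> (r, c') \<in> D \<and> c < c' \<longrightarrow> T (r, c) < T (r, c'))
     \<and> (\<forall>r r' c. (r, c) \<in> D \<and> (r', c) \<in> D \<and> r < r' \<longrightarrow> T (r, c) < T (r', c))}"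

definition right_lobster :: "nat \<Rightarrow> nat \<Rightarrow> nat \<Rightarrow> cell set" where
  "right_lobster b c1 c2 =
     {(1, c) | c. b + 2 \<le> c \<and> c \<le> b + 1 + c2}
   \<union> {(2, c) | c. 2 \<le> c \<and> c \<le> b + 1}
   \<union> {(3, c) | c. b + 2 \<le> c \<and> c \<le> b + 1 + c1}"

text \<open>Left lobster for the triple (b,c1,c2): top row c1 cells and bottom row c2 cells, both
right-justified ending in column m = max c1 c2; middle row b cells in columns m+1..m+b.\<close>
definition left_lobster :: "nat \<Rightarrow> nat \<Rightarrow> nat \<Rightarrow> cell set" where
  "left_lobster b c1 c2 = (let m = max c1 c2 in
     {(1, c) | c. m + 1 \<le> c + c2 \<and> c \<le> m}
   \<union> {(2, c) | c. m + 1 \<le> c \<and> c \<le> m + b}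
   \<union> {(3, c) | c. m + 1 \<le> c + c1 \<and> c \<le> m})"

definition swap_entries :: "nat \<Rightarrow> tableau \<Rightarrow> tableau" where
  "swap_entries i T = (\<lambda>x. if T x = i then Suc i else if T x = Suc i then i else T x)"

text \<open>The operator pi_i on SET D; None represents the result 0.\<close>
definition pi_op :: "cell set \<Rightarrow> nat \<Rightarrow> tableau \<Rightarrow> tableau option" where
  "pi_op D i T = (let x = inv_into D T i; y = inv_into D T (Suc i) in
     if fst x < fst y then Some T
     else if fst y < fst x then Some (swap_entries i T)
     else None)"

definition pi_step :: "cell set \<Rightarrow> tableau \<Rightarrow> tableau \<Rightarrow> bool" where
  "pi_step D T T' \<longleftrightarrow> T \<in> SET D \<and> (\<exists>i. 1 \<le> i \<and> i < card D \<and> pi_op D i T = Some T')"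

definition SET_le :: "cell set \<Rightarrow> tableau \<Rightarrow> tableau \<Rightarrow> bool" where
  "SET_le D = (pi_step D)\<^sup>*\<^sup>*"

text \<open>The map R: replace each entry i by N+1-i and rotate by 180 degrees. The rotation sends
cell (r,c) of the right lobster to (4-r, b+m+2-c) with m = max c1 c2.\<close>
definition R_map :: "nat \<Rightarrow> nat \<Rightarrow> nat \<Rightarrow> tableau \<Rightarrow> tableau" where
  "R_map b c1 c2 T = (\<lambda>(r, c).
     if (r, c) \<in> left_lobster b c2 c1
     then b + c1 + c2 + 1 - T (4 - r, b + max c1 c2 + 2 - c) else 0)"

end

theory Submission
  imports Defs
begin

text \<open>R complements the entries and transports the filling along the 180 degree rotation, which
maps the right lobster onto the left one and reverses both the row and the column order. Reversing
both orders and complementing the entries keeps fillings standard, and the same construction along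
the inverse rotation inverts R. The entries i and i+1 of T become N+1-i and N-i of R T, in rotated
cells, so "i+1 lies strictly above (below) i" turns into "N-i+1 lies strictly above (below) N-i":
R conjugates pi_i to pi_(N-i), in the fixing as well as in the swapping case. Hence R and its
inverse both preserve the covering steps of the order.\<close>

definition dual_tableau :: "cell set \<Rightarrow> (cell \<Rightarrow> cell) \<Rightarrow> nat \<Rightarrow> tableau \<Rightarrow> tableau" where
  "dual_tableau D' f N T = (\<lambda>x. if x \<in> D' then N + 1 - T (f x) else 0)"

lemma dual_tableau_cong:
  "(\<And>x. x \<in> D' \<Longrightarrow> f x = g x) \<Longrightarrow> dual_tableau D' f N = dual_tableau D' g N"
  by (auto simp: dual_tableau_def fun_eq_iff)

lemma mem_SET_iff:
  "T \<in> SET D \<longleftrightarrow> bij_betw T D {1..card D} \<and> (\<forall>x. x \<notin> D \<longrightarrow> T x = 0)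
     \<and> (\<forall>a\<in>D. \<forall>a'\<in>D. fst a = fst a' \<and> snd a < snd a' \<longrightarrow> T a < T a')
     \<and> (\<forall>a\<in>D. \<forall>a'\<in>D. snd a = snd a' \<and> fst a < fst a' \<longrightarrow> T a < T a')"
proof -
  have "(\<forall>r c c'. (r, c) \<in> D \<and> (r, c') \<in> D \<and> c < c' \<longrightarrow> T (r, c) < T (r, c'))
     \<longleftrightarrow> (\<forall>a\<in>D. \<forall>a'\<in>D. fst a = fst a' \<and> snd a < snd a' \<longrightarrow> T a < T a')"
    and "(\<forall>r r' c. (r, c) \<in> D \<and> (r', c) \<in> D \<and> r < r' \<longrightarrow> T (r, c) < T (r', c))
     \<longleftrightarrow> (\<forall>a\<in>D. \<forall>a'\<in>D. snd a = snd a' \<and> fst a < fst a' \<longrightarrow> T a < T a')"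
    by (metis prod.collapse fst_conv snd_conv)+
  then show ?thesis
    unfolding SET_def by blast
qed

lemma SET_entry_range: "T \<in> SET D \<Longrightarrow> a \<in> D \<Longrightarrow> T a \<in> {1..card D}"
  unfolding SET_def using bij_betwE by blast

lemma SET_outside: "T \<in> SET D \<Longrightarrow> a \<notin> D \<Longrightarrow> T a = 0"
  unfolding SET_def by blast

locale shape_antiisomorphism =
  fixes D D' :: "cell set" and f :: "cell \<Rightarrow> cell"
  assumes finite_shape: "finite D"
    and bij: "bij_betw f D' D"
    and fst_less_iff: "\<lbrakk>x \<in> D'; y \<in> D'\<rbrakk> \<Longrightarrow> fst (f x) < fst (f y) \<longleftrightarrow> fst y < fst x"
    and snd_less_iff: "\<lbrakk>x \<in> D'; y \<in> D'\<rbrakk> \<Longrightarrow> snd (f x) < snd (f y) \<longleftrightarrow> snd y < snd x"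
begin

abbreviation dual :: "tableau \<Rightarrow> tableau" where
  "dual \<equiv> dual_tableau D' f (card D)"

lemma card_eq: "card D' = card D"
  using bij bij_betw_same_card by blast

lemma mem_shape: "x \<in> D' \<Longrightarrow> f x \<in> D"
  using bij bij_betwE by blast

lemma fst_eq_iff: "\<lbrakk>x \<in> D'; y \<in> D'\<rbrakk> \<Longrightarrow> fst (f x) = fst (f y) \<longleftrightarrow> fst x = fst y"
  using fst_less_iff[of x y] fst_less_iff[of y x] by (metis linorder_neqE_nat less_irrefl)

lemma snd_eq_iff: "\<lbrakk>x \<in> D'; y \<in> D'\<rbrakk> \<Longrightarrow> snd (f x) = snd (f y) \<longleftrightarrow> snd x = snd y"
  using snd_less_iff[of x y] snd_less_iff[of y x] by (metis linorder_neqE_nat less_irrefl)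

lemma inverse: "shape_antiisomorphism D' D (inv_into D' f)"
proof
  show "finite D'"
    using bij finite_shape bij_betw_finite by blast
  show "bij_betw (inv_into D' f) D D'"
    using bij bij_betw_inv_into by blast
  fix x y assume "x \<in> D" "y \<in> D"
  then have "inv_into D' f x \<in> D'" "inv_into D' f y \<in> D'"
    and "f (inv_into D' f x) = x" "f (inv_into D' f y) = y"
    using bij by (auto simp: bij_betw_def inv_into_into f_inv_into_f)
  then show "fst (inv_into D' f x) < fst (inv_into D' f y) \<longleftrightarrow> fst y < fst x"
    and "snd (inv_into D' f x) < snd (inv_into D' f y) \<longleftrightarrow> snd y < snd x"
    using fst_less_iff snd_less_iff by metis+
qed

lemma dual_less:
  assumes T: "T \<in> SET D" and "a \<in> D'" "a' \<in> D'" and "T (f a') < T (f a)"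
  shows "dual T a < dual T a'"
  using assms SET_entry_range[OF T mem_shape[of a]] by (auto simp: dual_tableau_def)

lemma dual_SET:
  assumes T: "T \<in> SET D"
  shows "dual T \<in> SET D'"
proof -
  let ?N = "card D"
  have "bij_betw ((\<lambda>v. ?N + 1 - v) \<circ> (T \<circ> f)) D' {1..?N}"
  proof (rule bij_betw_trans[OF bij_betw_trans[OF bij]])
    show "bij_betw T D {1..?N}"
      using T unfolding SET_def by blast
    show "bij_betw (\<lambda>v. ?N + 1 - v) {1..?N} {1..?N}"
      by (rule bij_betw_byWitness[where f' = "\<lambda>v. ?N + 1 - v"]) auto
  qed
  then have "bij_betw (dual T) D' {1..card D'}"
    by (auto simp: card_eq dual_tableau_def intro: bij_betw_cong[THEN iffD1, rotated])
  moreover have "dual T a < dual T a'"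
    if "a \<in> D'" "a' \<in> D'" "fst a = fst a'" "snd a < snd a'" for a a'
  proof (rule dual_less[OF T that(1,2)])
    have "fst (f a') = fst (f a)" "snd (f a') < snd (f a)"
      using that fst_eq_iff snd_less_iff by simp_all
    then show "T (f a') < T (f a)"
      using T mem_shape that(1,2) unfolding mem_SET_iff by blast
  qed
  moreover have "dual T a < dual T a'"
    if "a \<in> D'" "a' \<in> D'" "snd a = snd a'" "fst a < fst a'" for a a'
  proof (rule dual_less[OF T that(1,2)])
    have "snd (f a') = snd (f a)" "fst (f a') < fst (f a)"
      using that snd_eq_iff fst_less_iff by simp_all
    then show "T (f a') < T (f a)"
      using T mem_shape that(1,2) unfolding mem_SET_iff by blast
  qed
  ultimately show ?thesis
    unfolding mem_SET_iff by (auto simp: dual_tableau_def)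
qed

lemma dual_dual:
  assumes T: "T \<in> SET D"
  shows "dual_tableau D (inv_into D' f) (card D) (dual T) = T"
proof
  fix y
  show "dual_tableau D (inv_into D' f) (card D) (dual T) y = T y"
  proof (cases "y \<in> D")
    case True
    then have "inv_into D' f y \<in> D'" "f (inv_into D' f y) = y"
      using bij by (auto simp: bij_betw_def inv_into_into f_inv_into_f)
    then show ?thesis
      using True SET_entry_range[OF T True] by (auto simp: dual_tableau_def)
  qed (simp add: dual_tableau_def SET_outside[OF T])
qed

lemma dual_swap_entries:
  assumes T: "T \<in> SET D" and "1 \<le> i" "i < card D"
  shows "dual (swap_entries i T) = swap_entries (card D - i) (dual T)"
proof
  fix x
  show "dual (swap_entries i T) x = swap_entries (card D - i) (dual T) x"
  proof (cases "x \<in> D'")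
    case True
    then show ?thesis
      using assms SET_entry_range[OF T mem_shape[OF True]]
      by (auto simp: dual_tableau_def swap_entries_def)
  qed (use assms in \<open>auto simp: dual_tableau_def swap_entries_def\<close>)
qed

lemma inv_into_dual:
  assumes T: "T \<in> SET D" and j: "j \<in> {1..card D}"
  shows "inv_into D' (dual T) j = inv_into D' f (inv_into D T (card D + 1 - j))"
proof (rule inv_into_f_eq)
  show "inj_on (dual T) D'"
    using dual_SET[OF T] unfolding SET_def bij_betw_def by blast
  let ?a = "inv_into D T (card D + 1 - j)"
  have "card D + 1 - j \<in> T ` D"
    using T j unfolding SET_def bij_betw_def by auto
  then have "?a \<in> D" "T ?a = card D + 1 - j"
    by (auto simp: inv_into_into f_inv_into_f)
  moreover have "inv_into D' f ?a \<in> D'" "f (inv_into D' f ?a) = ?a"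
    using bij \<open>?a \<in> D\<close> by (auto simp: bij_betw_def inv_into_into f_inv_into_f)
  ultimately show "inv_into D' f ?a \<in> D'" "dual T (inv_into D' f ?a) = j"
    using j by (auto simp: dual_tableau_def)
qed

lemma pi_op_dual:
  assumes T: "T \<in> SET D" and i: "1 \<le> i" "i < card D"
  shows "pi_op D' (card D - i) (dual T) = map_option dual (pi_op D i T)"
proof -
  let ?g = "inv_into D' f" and ?c = "inv_into D T"
  have "inv_into D' (dual T) (card D - i) = ?g (?c (Suc i))"
    and "inv_into D' (dual T) (Suc (card D - i)) = ?g (?c i)"
    using inv_into_dual[OF T, of "card D - i"] inv_into_dual[OF T, of "Suc (card D - i)"] i
    by (simp_all add: Suc_diff_le)
  moreover have "?c i \<in> D" "?c (Suc i) \<in> D"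
    using T i unfolding SET_def by (auto simp: bij_betw_def inv_into_into)
  moreover note shape_antiisomorphism.fst_less_iff[OF inverse]
  ultimately show ?thesis
    unfolding pi_op_def Let_def using dual_swap_entries[OF T i] by auto
qed

lemma pi_step_dual:
  assumes "pi_step D T T'"
  shows "pi_step D' (dual T) (dual T')"
proof -
  obtain i where T: "T \<in> SET D" and i: "1 \<le> i" "i < card D" and "pi_op D i T = Some T'"
    using assms unfolding pi_step_def by blast
  then have "pi_op D' (card D - i) (dual T) = Some (dual T')"
    by (simp add: pi_op_dual)
  moreover have "1 \<le> card D - i" "card D - i < card D'"
    using i card_eq by auto
  ultimately show ?thesis
    unfolding pi_step_def using dual_SET[OF T] by blast
qed

lemma SET_le_dual: "SET_le D T T' \<Longrightarrow> SET_le D' (dual T) (dual T')"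
  unfolding SET_le_def
proof (induction rule: rtranclp_induct)
  case (step U U')
  then show ?case
    using pi_step_dual by (metis rtranclp.rtrancl_into_rtrancl)
qed simp

theorem dual_order_isomorphism:
  "bij_betw dual (SET D) (SET D')
     \<and> (\<forall>T \<in> SET D. \<forall>T' \<in> SET D. SET_le D T T' \<longleftrightarrow> SET_le D' (dual T) (dual T'))"
proof -
  interpret inv: shape_antiisomorphism D' D "inv_into D' f"
    by (rule inverse)
  let ?dual_inv = "dual_tableau D (inv_into D' f) (card D)"
  have "inv_into D (inv_into D' f) x = f x" if "x \<in> D'" for x
    using bij that by (simp add: inv_into_inv_into_eq)
  then have "dual (?dual_inv S) = S" if "S \<in> SET D'" for S
    using inv.dual_dual[OF that] dual_tableau_cong card_eq by metis
  moreover have "?dual_inv S \<in> SET D" if "S \<in> SET D'" for S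
    using inv.dual_SET[OF that] card_eq by simp
  ultimately have "bij_betw dual (SET D) (SET D')"
    by (intro bij_betw_byWitness[where f' = ?dual_inv]) (auto simp: dual_dual dual_SET)
  moreover have "SET_le D T T'"
    if "T \<in> SET D" "T' \<in> SET D" "SET_le D' (dual T) (dual T')" for T T'
    using inv.SET_le_dual[OF that(3)] dual_dual that(1,2) card_eq by simp
  ultimately show ?thesis
    using SET_le_dual by blast
qed

end

definition lobster_rotation :: "nat \<Rightarrow> nat \<Rightarrow> nat \<Rightarrow> cell \<Rightarrow> cell" where
  "lobster_rotation b c1 c2 = (\<lambda>(r, c). (4 - r, b + max c1 c2 + 2 - c))"

lemma right_lobster_eq:
  "right_lobster b c1 c2 = {1} \<times> {b+2..b+1+c2} \<union> {2} \<times> {2..b+1} \<union> {3} \<times> {b+2..b+1+c1}"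
  unfolding right_lobster_def by auto

lemma card_right_lobster: "card (right_lobster b c1 c2) = b + c1 + c2"
  unfolding right_lobster_eq by (subst card_Un_disjoint; auto simp: card_cartesian_product)+

lemma lobster_rotation_antiisomorphism:
  "shape_antiisomorphism (right_lobster b c1 c2) (left_lobster b c2 c1) (lobster_rotation b c1 c2)"
proof
  show "finite (right_lobster b c1 c2)"
    by (simp add: right_lobster_eq)
  show "bij_betw (lobster_rotation b c1 c2) (left_lobster b c2 c1) (right_lobster b c1 c2)"
    by (rule bij_betw_byWitness[where f' = "lobster_rotation b c1 c2"])
      (auto simp: lobster_rotation_def right_lobster_def left_lobster_def Let_def)
qed (auto simp: lobster_rotation_def left_lobster_def Let_def)

lemma R_map_eq_dual_tableau:
  "R_map b c1 c2 = dual_tableau (left_lobster b c2 c1) (lobster_rotation b c1 c2)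
     (card (right_lobster b c1 c2))"
  by (auto simp: fun_eq_iff R_map_def dual_tableau_def lobster_rotation_def card_right_lobster)

theorem lemma5p3:
  fixes b c1 c2 :: nat
  assumes "0 < b" and "0 < c1" and "0 < c2"
  shows "bij_betw (R_map b c1 c2) (SET (right_lobster b c1 c2)) (SET (left_lobster b c2 c1))
     \<and> (\<forall>T \<in> SET (right_lobster b c1 c2). \<forall>T' \<in> SET (right_lobster b c1 c2).
          SET_le (right_lobster b c1 c2) T T' \<longleftrightarrow>
          SET_le (left_lobster b c2 c1) (R_map b c1 c2 T) (R_map b c1 c2 T'))"
  unfolding R_map_eq_dual_tableau
  using shape_antiisomorphism.dual_order_isomorphism[OF lobster_rotation_antiisomorphism] .

end
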